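(* Let $r$ be a positive integer and $x\in\{0,1\}^\omega$ an $r$-power free Sturmian word. Define $\varphi:\{0,1\}^+\to\{0,1\}$ by $\varphi(u)=0$ if $u\in\mathrm{Fact}(x)$ and $\varphi(u)=1$ otherwise. Then no $y\in\Omega(x)$ admits a $\varphi$-ultra monochromatic factorization.
   Context: $\mathrm{Fact}(x)$ is the set of non-empty finite factors of $x$. A word $x\in\{0,1\}^\omega$ is Sturmian if it is aperiodic (no suffix of $x$ has the form $u^\omega$ with $u$ non-empty) and balanced: for all factors $u,v$ of $x$ with $|u|=|v|$ and each $a\in\{0,1\}$, $\big||u|_a-|v|_a\big|\le 1$. $x$ is $r$-power free if $u^r\notin\mathrm{Fact}(x)$ for every $u\in\mathrm{Fact}(x)$. $\Omega(x)=\{y\in\{0,1\}^\omega:\mathrm{Fact}(y)\subseteq\mathrm{Fact}(x)\}$ (the shift orbit closure of $x$). A factorization $y=V_0V_1V_2\cdots$ with all $V_i$ non-empty is $\varphi$-ultra monochromatic if there is a color $c$ such that for all $k\ge1$, all $0\le n_1<\cdots<n_k$ and all permutations $\sigma$ of $\{1,\dots,k\}$, $\varphi(V_{n_{\sigma(1)}}\cdots V_{n_{\sigma(k)}})=c$. *)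

theory Defs
  imports Main "HOL-Combinatorics.Permutations"
begin

text \<open>Infinite binary words are functions nat \<Rightarrow> bool (False = 0, True = 1);
  finite words are bool lists.\<close>

type_synonym iword = "nat \<Rightarrow> bool"

definition Fact :: "iword \<Rightarrow> bool list set" where
  "Fact x = {u. u \<noteq> [] \<and> (\<exists>i. u = map x [i..<i + length u])}"

definition aperiodic :: "iword \<Rightarrow> bool" where
  "aperiodic x \<longleftrightarrow> \<not> (\<exists>n p. p > 0 \<and> (\<forall>i\<ge>n. x (i + p) = x i))"

definition balanced :: "iword \<Rightarrow> bool" where
  "balanced x \<longleftrightarrow> (\<forall>u\<in>Fact x. \<forall>v\<in>Fact x. length u = length v \<longrightarrow>
      (\<forall>a. \<bar>int (count_list u a) - int (count_list v a)\<bar> \<le> 1))"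

definition sturmian :: "iword \<Rightarrow> bool" where
  "sturmian x \<longleftrightarrow> aperiodic x \<and> balanced x"

definition power_free :: "nat \<Rightarrow> iword \<Rightarrow> bool" where
  "power_free r x \<longleftrightarrow> (\<forall>u\<in>Fact x. concat (replicate r u) \<notin> Fact x)"

definition Omega :: "iword \<Rightarrow> iword set" where
  "Omega x = {y. Fact y \<subseteq> Fact x}"

definition is_factorization :: "iword \<Rightarrow> (nat \<Rightarrow> bool list) \<Rightarrow> bool" where
  "is_factorization y V \<longleftrightarrow> (\<forall>n. V n \<noteq> []) \<and>
     (\<forall>n. concat (map V [0..<n]) = map y [0..<length (concat (map V [0..<n]))])"

definition ultra_monochromatic :: "(bool list \<Rightarrow> 'c) \<Rightarrow> (nat \<Rightarrow> bool list) \<Rightarrow> bool" where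
  "ultra_monochromatic \<phi> V \<longleftrightarrow> (\<exists>c. \<forall>k\<ge>1. \<forall>n::nat \<Rightarrow> nat. \<forall>\<sigma>.
      strict_mono_on {1..k} n \<longrightarrow> \<sigma> permutes {1..k} \<longrightarrow>
      \<phi> (concat (map (\<lambda>i. V (n (\<sigma> i))) [1..<k+1])) = c)"

definition fact_colouring :: "iword \<Rightarrow> bool list \<Rightarrow> nat" where
  "fact_colouring x u = (if u \<in> Fact x then 0 else 1)"

end

(*
  A balanced word x has a slope \<alpha>: every factor of length n contains \<alpha>n \<plusminus> 1 ones. If x is
  Sturmian, \<alpha> is irrational (a rational slope forces eventual periodicity), and the bound becomes
  strict. So along a factor z the discrepancy "ones among the first j letters minus \<alpha>j" stays in an
  open interval of length 1, while for long z its values are dense modulo 1 (Dirichlet).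

  Let v w and v u w be factors with v, w long. Density pins the minimal discrepancy along w, shifted
  by that of v, to within 2\<epsilon> of the minimal discrepancy along v; doing this with and without u in
  between shows that the discrepancy of u vanishes, impossible for u \<noteq> [] as \<alpha> is irrational.

  In an ultra monochromatic factorization y = V\<^sub>0 V\<^sub>1 ... with y \<in> \<Omega>(x) the colour is that of factors,
  since V\<^sub>0 is a factor. By r-power freeness the blocks get arbitrarily long, and for 0 < i < j the
  products V\<^sub>i V\<^sub>j and V\<^sub>i V\<^sub>0 V\<^sub>j are factors: V\<^sub>0 is inserted between long factors.
*)

theory Submission
  imports Defs "HOL-Analysis.Kronecker_Approximation_Theorem"
begin

definition ones :: "iword \<Rightarrow> nat \<Rightarrow> nat \<Rightarrow> nat" where
  "ones x i n = count_list (map x [i..<i + n]) True"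

definition min_ones :: "iword \<Rightarrow> nat \<Rightarrow> nat" where
  "min_ones x n = (LEAST k. \<exists>i. ones x i n = k)"

definition slope :: "iword \<Rightarrow> real" where
  "slope x = (SUP n\<in>{1..}. real (min_ones x n) / real n)"

lemma ones_0 [simp]: "ones x i 0 = 0"
  by (simp add: ones_def)

lemma ones_1: "ones x i 1 = of_bool (x i)"
  by (simp add: ones_def)

lemma ones_add: "ones x i (m + n) = ones x i m + ones x (i + m) n"
proof -
  have "[i..<i + (m + n)] = [i..<i + m] @ [i + m..<i + m + n]"
    by (metis add.assoc le_add1 upt_add_eq_append)
  then show ?thesis by (simp add: ones_def)
qed

lemma min_ones_attained: "\<exists>i. ones x i n = min_ones x n"
  unfolding min_ones_def by (rule LeastI_ex) auto

lemma min_ones_le: "min_ones x n \<le> ones x i n"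
  unfolding min_ones_def by (rule Least_le) auto

lemma balanced_ones_le:
  assumes "balanced x"
  shows "ones x i n \<le> ones x j n + 1"
proof (cases "n = 0")
  case False
  then have "map x [i..<i + n] \<in> Fact x" "map x [j..<j + n] \<in> Fact x"
    unfolding Fact_def by auto
  with assms have "\<bar>int (ones x i n) - int (ones x j n)\<bar> \<le> 1"
    unfolding balanced_def ones_def by auto
  then show ?thesis by linarith
qed simp

lemma balanced_ones_le_min_ones: "balanced x \<Longrightarrow> ones x i n \<le> min_ones x n + 1"
  using min_ones_attained[of x n] balanced_ones_le by metis

lemma min_ones_mult_le: "k * min_ones x n \<le> ones x i (k * n)"
proof (induction k arbitrary: i)
  case (Suc k)
  have "ones x i (Suc k * n) = ones x i n + ones x (i + n) (k * n)"
    by (simp add: ones_add)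
  with min_ones_le[of x n i] Suc[of "i + n"] show ?case by simp
qed simp

lemma balanced_ones_mult_le: "balanced x \<Longrightarrow> ones x i (k * n) \<le> k * (min_ones x n + 1)"
proof (induction k arbitrary: i)
  case (Suc k)
  have "ones x i (Suc k * n) = ones x i n + ones x (i + n) (k * n)"
    by (simp add: ones_add)
  with balanced_ones_le_min_ones[OF Suc.prems, of i n] Suc.IH[OF Suc.prems, of "i + n"]
  show ?case by simp
qed simp

lemma balanced_min_ones_ratio_le:
  assumes "balanced x" "n \<ge> 1" "k \<ge> 1"
  shows "real (min_ones x n) / n \<le> (real (min_ones x k) + 1) / k"
proof -
  have "k * min_ones x n \<le> ones x 0 (k * n)"
    by (rule min_ones_mult_le)
  also have "\<dots> \<le> n * (min_ones x k + 1)"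
    using balanced_ones_mult_le[OF assms(1), of 0 n k] by (metis mult.commute)
  finally have "real k * real (min_ones x n) \<le> real n * (real (min_ones x k) + 1)"
    by (metis of_nat_1 of_nat_add of_nat_le_iff of_nat_mult)
  then show ?thesis
    using assms by (simp add: field_simps)
qed

lemma balanced_slope_bounds:
  assumes "balanced x" "n \<ge> 1"
  shows "real (min_ones x n) \<le> slope x * n" "slope x * n \<le> real (min_ones x n) + 1"
proof -
  have "bdd_above ((\<lambda>n. real (min_ones x n) / n) ` {1..})"
    using balanced_min_ones_ratio_le[OF assms(1), of _ 1]
    by (intro bdd_aboveI2[where M = "real (min_ones x 1) + 1"]) auto
  then have "real (min_ones x n) / n \<le> slope x"
    unfolding slope_def using assms(2) by (intro cSUP_upper) auto
  then show "real (min_ones x n) \<le> slope x * n"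
    using assms(2) by (simp add: field_simps)
  have "slope x \<le> (real (min_ones x n) + 1) / n"
    unfolding slope_def using balanced_min_ones_ratio_le[OF assms(1) _ assms(2)]
    by (intro cSUP_least) auto
  then show "slope x * n \<le> real (min_ones x n) + 1"
    using assms(2) by (simp add: field_simps)
qed

lemma balanced_ones_slope_dev:
  assumes "balanced x"
  shows "\<bar>real (ones x i n) - slope x * n\<bar> \<le> 1"
proof (cases "n = 0")
  case False
  then have "n \<ge> 1" by simp
  have "real (min_ones x n) \<le> ones x i n" "ones x i n \<le> real (min_ones x n) + 1"
    using min_ones_le[of x n i] balanced_ones_le_min_ones[OF assms, of i n] by simp_all
  with balanced_slope_bounds[OF assms \<open>n \<ge> 1\<close>] show ?thesis by linarith
qed simp

lemma balanced_integral_slope_dev: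
  assumes "balanced x" and slope: "slope x * q = of_int p"
  shows "\<bar>int (ones x j (k * q)) - int k * p\<bar> \<le> 1"
proof -
  have "slope x * real (k * q) = real k * of_int p"
    by (simp add: algebra_simps flip: slope)
  then have "\<bar>real (ones x j (k * q)) - real k * of_int p\<bar> \<le> 1"
    using balanced_ones_slope_dev[OF assms(1), of j "k * q"] by (simp only:)
  then have "of_int \<bar>int (ones x j (k * q)) - int k * p\<bar> \<le> (1::real)"
    by simp
  then show ?thesis
    by (simp only: of_int_le_1_iff)
qed

lemma balanced_integral_slope_no_two_exceptions:
  assumes bal: "balanced x" and q: "q \<ge> 1" and slope: "slope x * q = of_int p"
    and exc: "int (ones x j q) \<noteq> p" "int (ones x (j + Suc t * q) q) \<noteq> p"
  shows False
proof -
  define m where "m = min_ones x q"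
  have "real m \<le> of_int p" "of_int p \<le> real m + 1"
    using balanced_slope_bounds[OF bal q] slope unfolding m_def by auto
  then have p: "p = int m \<or> p = int m + 1" by linarith
  have block: "m \<le> ones x i q" "ones x i q \<le> m + 1" for i
    unfolding m_def using min_ones_le balanced_ones_le_min_ones[OF bal] by auto
  have middle: "t * m \<le> ones x (j + q) (t * q)" "ones x (j + q) (t * q) \<le> t * (m + 1)"
    unfolding m_def using min_ones_mult_le balanced_ones_mult_le[OF bal] by auto
  have len: "Suc (Suc t) * q = q + (t * q + q)" by (simp add: algebra_simps)
  have total: "ones x j (Suc (Suc t) * q)
      = ones x j q + ones x (j + q) (t * q) + ones x (j + Suc t * q) q"
    unfolding len ones_add by (simp add: algebra_simps)
  have dev: "\<bar>int (ones x j (Suc (Suc t) * q)) - (2 + int t) * p\<bar> \<le> 1"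
    using balanced_integral_slope_dev[OF bal slope, of j "Suc (Suc t)"] by simp
  from p show False
  proof
    assume p_eq: "p = int m"
    with exc block[of j] block[of "j + Suc t * q"]
    have "ones x j q = m + 1" "ones x (j + Suc t * q) q = m + 1"
      by linarith+
    with total middle have "t * m + 2 * m + 2 \<le> ones x j (Suc (Suc t) * q)"
      by linarith
    then have "int t * int m + 2 * int m + 2 \<le> int (ones x j (Suc (Suc t) * q))"
      by (metis (mono_tags) of_nat_add of_nat_le_iff of_nat_mult of_nat_numeral)
    with dev p_eq show False
      by (simp add: distrib_right)
  next
    assume p_eq: "p = int m + 1"
    with exc block[of j] block[of "j + Suc t * q"]
    have "ones x j q = m" "ones x (j + Suc t * q) q = m"
      by linarith+
    with total middle(2) have "ones x j (Suc (Suc t) * q) + 2 \<le> t * (m + 1) + 2 * (m + 1)"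
      by simp
    then have "int (ones x j (Suc (Suc t) * q)) + 2 \<le> int t * (int m + 1) + 2 * (int m + 1)"
      by (metis (mono_tags) of_nat_1 of_nat_add of_nat_le_iff of_nat_mult of_nat_numeral)
    with dev p_eq show False
      by (simp add: distrib_right)
  qed
qed

lemma balanced_integral_slope_eventually_periodic:
  assumes bal: "balanced x" and q: "q \<ge> 1" and slope: "slope x * q = of_int p"
  shows "\<exists>N. \<forall>j\<ge>N. x (j + q) = x j"
proof -
  define E where "E = {j. int (ones x j q) \<noteq> p}"
  have "inj_on (\<lambda>j. j mod q) E"
  proof -
    have False if "j \<in> E" "j' \<in> E" "j mod q = j' mod q" "j < j'" for j j'
    proof -
      have "q dvd j' - j"
        using that(3,4) mod_eq_dvd_iff_nat[of j j' q] by simp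
      then obtain s where s: "j' - j = q * s" ..
      with \<open>j < j'\<close> obtain t where "s = Suc t"
        by (cases s) auto
      with s \<open>j < j'\<close> have "j' = j + Suc t * q"
        by (simp add: algebra_simps)
      with that show False
        using balanced_integral_slope_no_two_exceptions[OF bal q slope] unfolding E_def by blast
    qed
    then show ?thesis
      by (metis inj_onI linorder_neqE_nat)
  qed
  moreover have "(\<lambda>j. j mod q) ` E \<subseteq> {..<q}"
    using q by auto
  ultimately have "finite E"
    by (metis finite_imageD finite_lessThan finite_subset)
  then obtain N where N: "E \<subseteq> {..<N}"
    using finite_nat_bounded by blast
  have "x (j + q) = x j" if "j \<ge> N" for j
  proof -
    have "int (ones x j q) = p" "int (ones x (j + 1) q) = p"
      using N that unfolding E_def by auto
    moreover have "ones x j (q + 1) = ones x j (1 + q)"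
      by (simp add: add.commute)
    ultimately have "ones x (j + q) 1 = ones x j 1"
      unfolding ones_add by simp
    then show ?thesis
      unfolding ones_1 of_bool_eq_iff .
  qed
  then show ?thesis by blast
qed

lemma irrational_mult_of_nat_neq_of_int:
  fixes a :: real and q :: nat
  assumes "a \<notin> \<rat>" "q \<ge> 1"
  shows "a * q \<noteq> of_int p"
proof
  assume "a * q = of_int p"
  then have "a = of_int p / of_nat q"
    using assms(2) by (simp add: field_simps)
  with assms(1) show False by simp
qed

lemma sturmian_slope_irrational:
  assumes "sturmian x"
  shows "slope x \<notin> \<rat>"
proof
  assume "slope x \<in> \<rat>"
  then obtain p q where "slope x = of_int p / of_int q" "q > 0"
    by (metis Rats_cases')
  then have "slope x * nat q = of_int p" "nat q \<ge> 1"
    by auto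
  with assms have "\<exists>N. \<forall>j\<ge>N. x (j + nat q) = x j"
    unfolding sturmian_def by (blast intro: balanced_integral_slope_eventually_periodic)
  with assms \<open>nat q \<ge> 1\<close> show False
    unfolding sturmian_def aperiodic_def by (metis less_le_trans zero_less_one)
qed

lemma sturmian_ones_slope_dev:
  assumes "sturmian x"
  shows "\<bar>real (ones x i n) - slope x * n\<bar> < 1"
proof (cases "n = 0")
  case False
  have "slope x * n \<noteq> of_int (int (ones x i n) + e)" for e
    using irrational_mult_of_nat_neq_of_int[OF sturmian_slope_irrational[OF assms], of n "int (ones x i n) + e"] False
    by simp
  from this[of 1] this[of "-1"] have "\<bar>real (ones x i n) - slope x * n\<bar> \<noteq> 1"
    by (auto simp: abs_if split: if_splits)
  with balanced_ones_slope_dev[of x i n] assms show ?thesis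
    unfolding sturmian_def by fastforce
qed simp

definition dense_mod_one :: "real \<Rightarrow> real set \<Rightarrow> bool" where
  "dense_mod_one \<epsilon> S \<longleftrightarrow> (\<forall>t. \<exists>s\<in>S. \<exists>k::int. \<bar>s - t - of_int k\<bar> < \<epsilon>)"

lemma multiples_approximate_mod_one:
  fixes \<beta> t :: real
  assumes "\<beta> \<noteq> 0"
  shows "\<exists>s::nat. s \<le> 1 / \<bar>\<beta>\<bar> \<and> (\<exists>k::int. \<bar>s * \<beta> - t - of_int k\<bar> < \<bar>\<beta>\<bar>)"
proof -
  \<comment> \<open>the distance from 0 to the target \<open>t mod 1\<close>, measured in the direction of \<open>\<beta>\<close>\<close>
  define g where "g = (if \<beta> > 0 then frac t else 1 - frac t)"
  have g: "0 \<le> g" "g \<le> 1"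
    unfolding g_def using frac_ge_0[of t] frac_lt_1[of t] by auto
  define s where "s = nat \<lfloor>g / \<bar>\<beta>\<bar>\<rfloor>"
  have "real s = of_int \<lfloor>g / \<bar>\<beta>\<bar>\<rfloor>"
    unfolding s_def using g assms by simp
  then have s: "real s \<le> g / \<bar>\<beta>\<bar>" "g / \<bar>\<beta>\<bar> < real s + 1"
    by linarith+
  then have s_mult: "s * \<bar>\<beta>\<bar> \<le> g" "g < s * \<bar>\<beta>\<bar> + \<bar>\<beta>\<bar>"
    using assms by (simp_all add: field_simps)
  have "real s \<le> 1 / \<bar>\<beta>\<bar>"
    using s(1) g(2) assms by (smt (verit) divide_right_mono abs_ge_zero)
  moreover have "\<exists>k::int. \<bar>s * \<beta> - t - of_int k\<bar> < \<bar>\<beta>\<bar>"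
  proof (cases "\<beta> > 0")
    case True
    then have "\<bar>s * \<beta> - t - of_int (- \<lfloor>t\<rfloor>)\<bar> < \<bar>\<beta>\<bar>"
      using s_mult unfolding g_def frac_def by auto
    then show ?thesis ..
  next
    case False
    then have "\<bar>s * \<beta> - t - of_int (- \<lfloor>t\<rfloor> - 1)\<bar> < \<bar>\<beta>\<bar>"
      using s_mult assms unfolding g_def frac_def by auto
    then show ?thesis ..
  qed
  ultimately show ?thesis by blast
qed

lemma irrational_multiples_dense_mod_one:
  fixes a \<epsilon> :: real
  assumes a: "a \<notin> \<rat>" and \<epsilon>: "\<epsilon> > 0"
  shows "\<exists>N. dense_mod_one \<epsilon> ((\<lambda>j. real j * a) ` {..N})"
proof -
  obtain M :: nat where M: "1 / \<epsilon> < M"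
    using reals_Archimedean2 by blast
  moreover have "0 < 1 / \<epsilon>"
    using \<epsilon> by simp
  ultimately have "M > 0"
    by linarith
  with M \<epsilon> have "1 / M < \<epsilon>"
    by (simp add: field_simps)
  obtain h q where q: "0 < q" "\<bar>of_int q * a - of_int h\<bar> < 1 / M"
    using Dirichlet_approx[OF \<open>M > 0\<close>, of a] by blast
  define \<beta> where "\<beta> = real (nat q) * a - of_int h"
  have "\<beta> \<noteq> 0"
    using irrational_mult_of_nat_neq_of_int[OF a, of "nat q" h] q(1) unfolding \<beta>_def
    by (simp add: mult.commute)
  have "\<bar>\<beta>\<bar> < \<epsilon>"
    using q \<open>1 / M < \<epsilon>\<close> unfolding \<beta>_def by simp
  have "dense_mod_one \<epsilon> ((\<lambda>j. real j * a) ` {..nat q * nat \<lfloor>1 / \<bar>\<beta>\<bar>\<rfloor>})"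
    unfolding dense_mod_one_def
  proof
    fix t
    obtain s :: nat and k :: int where s: "s \<le> 1 / \<bar>\<beta>\<bar>" "\<bar>s * \<beta> - t - of_int k\<bar> < \<bar>\<beta>\<bar>"
      using multiples_approximate_mod_one[OF \<open>\<beta> \<noteq> 0\<close>] by blast
    then have "s \<le> nat \<lfloor>1 / \<bar>\<beta>\<bar>\<rfloor>"
      by (simp add: le_nat_floor)
    then have "nat q * s \<in> {..nat q * nat \<lfloor>1 / \<bar>\<beta>\<bar>\<rfloor>}"
      by simp
    moreover have "real (nat q * s) * a - t - of_int (k + int s * h) = s * \<beta> - t - of_int k"
      unfolding \<beta>_def by (simp add: algebra_simps)
    then have "\<bar>real (nat q * s) * a - t - of_int (k + int s * h)\<bar> < \<epsilon>"
      using s(2) \<open>\<bar>\<beta>\<bar> < \<epsilon>\<close> by simp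
    ultimately show "\<exists>r\<in>(\<lambda>j. real j * a) ` {..nat q * nat \<lfloor>1 / \<bar>\<beta>\<bar>\<rfloor>}.
        \<exists>k::int. \<bar>r - t - of_int k\<bar> < \<epsilon>"
      by blast
  qed
  then show ?thesis ..
qed

definition discrepancy :: "real \<Rightarrow> bool list \<Rightarrow> nat \<Rightarrow> real" where
  "discrepancy a z j = real (count_list (take j z) True) - a * j"

definition discrepancies :: "real \<Rightarrow> bool list \<Rightarrow> real set" where
  "discrepancies a z = discrepancy a z ` {..length z}"

lemma finite_discrepancies: "finite (discrepancies a z)"
  by (simp add: discrepancies_def)

lemma discrepancies_nonempty: "discrepancies a z \<noteq> {}"
  by (simp add: discrepancies_def)

lemma discrepancies_append:
  "discrepancies a (v @ w) = discrepancies a v \<union> (+) (discrepancy a v (length v)) ` discrepancies a w"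
proof -
  have prefix: "discrepancy a (v @ w) j = discrepancy a v j" if "j \<le> length v" for j
    using that by (simp add: discrepancy_def)
  have suffix: "discrepancy a (v @ w) (length v + j) = discrepancy a v (length v) + discrepancy a w j" for j
    by (simp add: discrepancy_def algebra_simps)
  have "{..length (v @ w)} = {..length v} \<union> (\<lambda>j. length v + j) ` {..length w}"
  proof (intro set_eqI iffI)
    fix j
    assume "j \<in> {..length (v @ w)}"
    then show "j \<in> {..length v} \<union> (\<lambda>j. length v + j) ` {..length w}"
      by (cases "j \<le> length v") (auto intro!: image_eqI[of _ _ "j - length v"])
  qed auto
  then have "discrepancies a (v @ w) = discrepancy a (v @ w) ` {..length v}
      \<union> (\<lambda>j. discrepancy a (v @ w) (length v + j)) ` {..length w}"
    unfolding discrepancies_def by (simp add: image_Un image_image)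
  also have "\<dots> = discrepancy a v ` {..length v}
      \<union> (\<lambda>j. discrepancy a v (length v) + discrepancy a w j) ` {..length w}"
    using prefix suffix by (intro arg_cong2[where f = "(\<union>)"] image_cong) auto
  finally show ?thesis
    unfolding discrepancies_def image_image .
qed

lemma discrepancy_map:
  "j \<le> n \<Longrightarrow> discrepancy a (map x [p..<p + n]) j = real (ones x p j) - a * j"
  by (simp add: discrepancy_def ones_def take_map)

lemma sturmian_factor_discrepancies_close:
  assumes "sturmian x" "z \<in> Fact x" "d \<in> discrepancies (slope x) z" "d' \<in> discrepancies (slope x) z"
  shows "\<bar>d - d'\<bar> < 1"
proof -
  obtain p where z: "z = map x [p..<p + length z]"
    using assms(2) unfolding Fact_def by blast
  have close: "\<bar>discrepancy (slope x) z j - discrepancy (slope x) z i\<bar> < 1"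
    if "i \<le> j" "j \<le> length z" for i j
  proof -
    have "ones x p j = ones x p i + ones x (p + i) (j - i)"
      using ones_add[of x p i "j - i"] that(1) by simp
    then have "discrepancy (slope x) z j - discrepancy (slope x) z i
        = real (ones x (p + i) (j - i)) - slope x * (j - i)"
      using that discrepancy_map[of _ "length z" "slope x" x p] z
      by (simp add: algebra_simps of_nat_diff)
    then show ?thesis
      using sturmian_ones_slope_dev[OF assms(1)] by (metis of_nat_diff[OF that(1)])
  qed
  from assms(3,4) obtain i j where "i \<le> length z" "j \<le> length z"
    "d = discrepancy (slope x) z i" "d' = discrepancy (slope x) z j"
    unfolding discrepancies_def by auto
  then show ?thesis
    using close[of i j] close[of j i] by (cases "i \<le> j") (auto simp: abs_minus_commute)
qed

lemma irrational_long_word_discrepancies_dense: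
  assumes "a \<notin> \<rat>" "\<epsilon> > 0"
  shows "\<exists>N. \<forall>z. N \<le> length z \<longrightarrow> dense_mod_one \<epsilon> (discrepancies a z)"
proof -
  obtain N where N: "dense_mod_one \<epsilon> ((\<lambda>j. real j * a) ` {..N})"
    using irrational_multiples_dense_mod_one[OF assms] ..
  have "dense_mod_one \<epsilon> (discrepancies a z)" if "N \<le> length z" for z
    unfolding dense_mod_one_def
  proof
    fix t
    obtain j k where j: "j \<le> N" "\<bar>real j * a - (- t) - of_int k\<bar> < \<epsilon>"
      using N unfolding dense_mod_one_def by blast
    let ?c = "int (count_list (take j z) True)"
    have "discrepancy a z j - t - of_int (?c - k) = - (real j * a - (- t) - of_int k)"
      by (simp add: discrepancy_def algebra_simps)
    with j(2) have "\<bar>discrepancy a z j - t - of_int (?c - k)\<bar> < \<epsilon>"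
      by (simp only: abs_minus_cancel)
    moreover have "discrepancy a z j \<in> discrepancies a z"
      using j(1) that unfolding discrepancies_def by simp
    ultimately show "\<exists>d\<in>discrepancies a z. \<exists>k::int. \<bar>d - t - of_int k\<bar> < \<epsilon>"
      by blast
  qed
  then show ?thesis by blast
qed

lemma dense_mod_one_translate:
  assumes "dense_mod_one \<epsilon> S"
  shows "dense_mod_one \<epsilon> ((+) c ` S)"
  unfolding dense_mod_one_def
proof
  fix t
  obtain s k where "s \<in> S" "\<bar>s - (t - c) - of_int k\<bar> < \<epsilon>"
    using assms unfolding dense_mod_one_def by blast
  then show "\<exists>s\<in>(+) c ` S. \<exists>k::int. \<bar>s - t - of_int k\<bar> < \<epsilon>"
    by (intro bexI[of _ "c + s"] exI[of _ k]) (auto simp: algebra_simps)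
qed

lemma dense_mod_one_Min_less:
  assumes "finite B" "B \<noteq> {}" "dense_mod_one \<epsilon> B" and close: "\<forall>b\<in>B. \<bar>a - b\<bar> < 1"
  shows "Min B < a + 2 * \<epsilon>"
proof (rule ccontr)
  assume "\<not> Min B < a + 2 * \<epsilon>"
  obtain b k where b: "b \<in> B" "\<bar>b - (a + \<epsilon>) - of_int k\<bar> < \<epsilon>"
    using assms(3) unfolding dense_mod_one_def by blast
  have "Min B \<le> b"
    using assms(1) b(1) by simp
  moreover have "\<bar>a - b\<bar> < 1"
    using close b(1) by blast
  ultimately have "0 < (of_int k :: real)" "(of_int k :: real) < 1"
    using \<open>\<not> Min B < a + 2 * \<epsilon>\<close> b(2) unfolding abs_less_iff by linarith+
  then show False by simp
qed

lemma dense_mod_one_Min_close: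
  assumes "finite A" "A \<noteq> {}" "dense_mod_one \<epsilon> A" "finite B" "B \<noteq> {}" "dense_mod_one \<epsilon> B"
    and close: "\<forall>a\<in>A. \<forall>b\<in>B. \<bar>a - b\<bar> < 1"
  shows "\<bar>Min A - Min B\<bar> < 2 * \<epsilon>"
proof -
  have "Min B < Min A + 2 * \<epsilon>"
    using close assms(1,2) by (intro dense_mod_one_Min_less[OF assms(4-6)]) simp
  moreover have "Min A < Min B + 2 * \<epsilon>"
    using close assms(4,5) by (intro dense_mod_one_Min_less[OF assms(1-3)]) (simp add: abs_minus_commute)
  ultimately show ?thesis by linarith
qed

lemma Min_translate:
  fixes S :: "'a::linordered_ab_semigroup_add set"
  shows "finite S \<Longrightarrow> S \<noteq> {} \<Longrightarrow> Min ((+) c ` S) = c + Min S"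
  by (simp add: mono_Min_commute[symmetric] mono_add)

lemma sturmian_insertion_discrepancy_small:
  fixes x :: iword and u v w :: "bool list"
  defines "D \<equiv> discrepancies (slope x)"
  assumes x: "sturmian x" and P: "v @ w \<in> Fact x" and Q: "v @ u @ w \<in> Fact x"
    and dense: "dense_mod_one \<epsilon> (D v)" "dense_mod_one \<epsilon> (D w)"
  shows "\<bar>discrepancy (slope x) u (length u)\<bar> < 4 * \<epsilon>"
proof -
  define c where "c = discrepancy (slope x) v (length v)"
  define d where "d = discrepancy (slope x) u (length u)"
  have fin: "finite (D z)" "D z \<noteq> {}" for z
    unfolding D_def by (simp_all add: finite_discrepancies discrepancies_nonempty)
  have split_P: "D (v @ w) = D v \<union> (+) c ` D w"
    unfolding D_def c_def by (rule discrepancies_append)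
  have split_Q: "D (v @ u @ w) = D v \<union> (+) c ` (D u \<union> (+) d ` D w)"
    unfolding D_def c_def d_def by (simp only: discrepancies_append)
  have "\<bar>Min (D v) - Min ((+) c ` D w)\<bar> < 2 * \<epsilon>"
  proof (rule dense_mod_one_Min_close)
    show "\<forall>a\<in>D v. \<forall>b\<in>(+) c ` D w. \<bar>a - b\<bar> < 1"
      using sturmian_factor_discrepancies_close[OF x P] unfolding split_P[unfolded D_def] D_def
      by blast
  qed (use fin dense dense_mod_one_translate in auto)
  moreover have "\<bar>Min (D v) - Min ((+) (c + d) ` D w)\<bar> < 2 * \<epsilon>"
  proof (rule dense_mod_one_Min_close)
    have "(+) (c + d) ` D w \<subseteq> (+) c ` (D u \<union> (+) d ` D w)"
      by (auto simp: image_image add.assoc)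
    then show "\<forall>a\<in>D v. \<forall>b\<in>(+) (c + d) ` D w. \<bar>a - b\<bar> < 1"
      using sturmian_factor_discrepancies_close[OF x Q] unfolding split_Q[unfolded D_def] D_def
      by blast
  qed (use fin dense dense_mod_one_translate in auto)
  ultimately show ?thesis
    unfolding d_def[symmetric] using Min_translate[OF fin(1,2)] by simp
qed

lemma sturmian_no_insertion_between_long_factors:
  assumes x: "sturmian x" and "u \<noteq> []"
    and long: "\<And>N. \<exists>v w. N \<le> length v \<and> N \<le> length w \<and> v @ w \<in> Fact x \<and> v @ u @ w \<in> Fact x"
  shows False
proof -
  define d where "d = discrepancy (slope x) u (length u)"
  have "slope x * length u \<noteq> of_int (int (count_list u True))"
    using irrational_mult_of_nat_neq_of_int[OF sturmian_slope_irrational[OF x],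
        of "length u" "int (count_list u True)"] \<open>u \<noteq> []\<close>
    by (simp add: Suc_le_eq)
  then have "d \<noteq> 0"
    unfolding d_def discrepancy_def by auto
  then obtain N where
    N: "\<And>z. N \<le> length z \<Longrightarrow> dense_mod_one (\<bar>d\<bar> / 4) (discrepancies (slope x) z)"
    using irrational_long_word_discrepancies_dense[OF sturmian_slope_irrational[OF x],
        of "\<bar>d\<bar> / 4"]
    by auto
  obtain v w where "N \<le> length v" "N \<le> length w" "v @ w \<in> Fact x" "v @ u @ w \<in> Fact x"
    using long by blast
  then have "\<bar>discrepancy (slope x) u (length u)\<bar> < 4 * (\<bar>d\<bar> / 4)"
    by (intro sturmian_insertion_discrepancy_small[OF x] N)
  then show False
    unfolding d_def by simp
qed

lemma permutes_shift_Suc: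
  assumes p: "p permutes {..<k}"
  shows "(\<lambda>i. if i \<in> {1..k} then Suc (p (i - 1)) else i) permutes {1..k}"
    (is "?\<sigma> permutes _")
proof (rule bij_imp_permutes)
  have "inj_on ?\<sigma> {1..k}"
  proof (rule inj_onI)
    fix i j
    assume "i \<in> {1..k}" "j \<in> {1..k}" "?\<sigma> i = ?\<sigma> j"
    then have "p (i - 1) = p (j - 1)"
      by simp
    then have "i - 1 = j - 1"
      using permutes_inj[OF p] by (simp add: inj_eq)
    with \<open>i \<in> {1..k}\<close> \<open>j \<in> {1..k}\<close> show "i = j"
      by auto
  qed
  moreover have "?\<sigma> i \<in> {1..k}" if "i \<in> {1..k}" for i
  proof -
    have "i - 1 \<in> {..<k}"
      using that by auto
    then have "p (i - 1) \<in> {..<k}"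
      by (simp only: permutes_in_image[OF p])
    with that show ?thesis
      by simp
  qed
  then have "?\<sigma> ` {1..k} \<subseteq> {1..k}"
    by blast
  ultimately show "bij_betw ?\<sigma> {1..k} {1..k}"
    unfolding bij_betw_def using endo_inj_surj[OF finite_atLeastAtMost] by blast
qed auto

lemma distinct_list_permuted_strict_mono:
  fixes ns :: "'a::linorder list"
  assumes "distinct ns"
  obtains n \<sigma> where "strict_mono_on {1..length ns} n" "\<sigma> permutes {1..length ns}"
    "map (\<lambda>i. n (\<sigma> i)) [1..<length ns + 1] = ns"
proof -
  define k where "k = length ns"
  define ys where "ys = sort ns"
  have ys: "sorted_wrt (<) ys" "length ys = k"
    using assms unfolding ys_def k_def by (simp_all add: strict_sorted_iff)
  have "mset ns = mset ys"
    unfolding ys_def by simp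
  then obtain p where p: "p permutes {..<length ys}" "permute_list p ys = ns"
    by (rule mset_eq_permutation)
  then have p: "p permutes {..<k}" "permute_list p ys = ns"
    using ys(2) by simp_all
  define n where "n i = ys ! (i - 1)" for i
  define \<sigma> where "\<sigma> i = (if i \<in> {1..k} then Suc (p (i - 1)) else i)" for i
  have "strict_mono_on {1..k} n"
    unfolding n_def using ys(2)
    by (intro strict_mono_onI) (auto intro!: sorted_wrt_nth_less[OF ys(1)])
  moreover have "\<sigma> permutes {1..k}"
    unfolding \<sigma>_def using p(1) by (rule permutes_shift_Suc)
  moreover have "map (\<lambda>i. n (\<sigma> i)) [1..<k + 1] = ns"
  proof (rule nth_equalityI)
    fix i
    assume "i < length (map (\<lambda>i. n (\<sigma> i)) [1..<k + 1])"
    then have "i < k"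
      by (simp del: upt_Suc)
    then show "map (\<lambda>i. n (\<sigma> i)) [1..<k + 1] ! i = ns ! i"
      using permute_list_nth[of p ys i] p ys(2) unfolding n_def \<sigma>_def
      by (simp add: nth_upt del: upt_Suc)
  qed (simp del: upt_Suc add: k_def)
  ultimately show ?thesis
    using that unfolding k_def by blast
qed

lemma ultra_monochromatic_distinct_products:
  assumes "ultra_monochromatic \<phi> V"
  obtains c where "\<And>ns. distinct ns \<Longrightarrow> ns \<noteq> [] \<Longrightarrow> \<phi> (concat (map V ns)) = c"
proof -
  obtain c where c: "\<And>k n \<sigma>. k \<ge> 1 \<Longrightarrow> strict_mono_on {1..k} n \<Longrightarrow> \<sigma> permutes {1..k} \<Longrightarrow>
      \<phi> (concat (map (\<lambda>i. V (n (\<sigma> i))) [1..<k + 1])) = c"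
    using assms unfolding ultra_monochromatic_def by blast
  have "\<phi> (concat (map V ns)) = c" if ns: "distinct ns" "ns \<noteq> []" for ns
  proof -
    obtain n \<sigma> where n\<sigma>: "strict_mono_on {1..length ns} n" "\<sigma> permutes {1..length ns}"
      "map (\<lambda>i. n (\<sigma> i)) [1..<length ns + 1] = ns"
      using distinct_list_permuted_strict_mono[OF ns(1)] by blast
    have "map V ns = map (\<lambda>i. V (n (\<sigma> i))) [1..<length ns + 1]"
      by (subst n\<sigma>(3)[symmetric]) simp
    with c[OF _ n\<sigma>(1,2)] ns(2) show ?thesis
      by (simp add: Suc_le_eq)
  qed
  then show ?thesis ..
qed

lemma factorization_first_block_in_Fact:
  assumes "is_factorization y V"
  shows "V 0 \<in> Fact y"
proof -
  have "concat (map V [0..<1]) = map y [0..<length (concat (map V [0..<1]))]" "V 0 \<noteq> []"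
    using assms unfolding is_factorization_def by blast+
  then have "V 0 = map y [0..<0 + length (V 0)]" "V 0 \<noteq> []"
    by simp_all
  then show ?thesis
    unfolding Fact_def by blast
qed

lemma ultra_monochromatic_fact_colouring_products_in_Fact:
  assumes "y \<in> Omega x" "is_factorization y V" "ultra_monochromatic (fact_colouring x) V"
    and "distinct ns" "ns \<noteq> []"
  shows "concat (map V ns) \<in> Fact x"
proof -
  obtain c where c: "\<And>ns. distinct ns \<Longrightarrow> ns \<noteq> [] \<Longrightarrow> fact_colouring x (concat (map V ns)) = c"
    using ultra_monochromatic_distinct_products[OF assms(3)] by blast
  have "V 0 \<in> Fact x"
    using factorization_first_block_in_Fact[OF assms(2)] assms(1) unfolding Omega_def by blast
  with c[of "[0]"] have "c = 0"
    by (simp add: fact_colouring_def)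
  with c[OF assms(4,5)] show ?thesis
    by (simp add: fact_colouring_def split: if_splits)
qed

lemma power_free_products_unbounded_blocks:
  fixes V :: "nat \<Rightarrow> bool list"
  assumes "r \<ge> 1" "power_free r x"
    and products: "\<And>ns. distinct ns \<Longrightarrow> ns \<noteq> [] \<Longrightarrow> concat (map V ns) \<in> Fact x"
  shows "\<exists>i>m. N \<le> length (V i)"
proof (rule ccontr)
  assume "\<not> ?thesis"
  then have "V ` {m<..} \<subseteq> {u. set u \<subseteq> UNIV \<and> length u \<le> N}"
    by (auto simp: not_le intro: less_imp_le)
  moreover have "finite {u :: bool list. set u \<subseteq> UNIV \<and> length u \<le> N}"
    by (rule finite_lists_length_le) simp
  ultimately have "finite (V ` {m<..})"
    by (rule finite_subset)
  then obtain i where "i \<in> {m<..}" "infinite {j \<in> {m<..}. V j = V i}"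
    using pigeonhole_infinite[OF infinite_Ioi] by blast
  then obtain A where A: "A \<subseteq> {j \<in> {m<..}. V j = V i}" "finite A" "card A = r"
    using infinite_arbitrarily_large by blast
  define ns where "ns = sorted_list_of_set A"
  have ns: "distinct ns" "length ns = r" "\<forall>j\<in>set ns. V j = V i"
    unfolding ns_def using A by auto
  then have "map V ns = replicate r (V i)"
    by (simp add: map_replicate_const cong: map_cong)
  moreover have "ns \<noteq> []"
    using ns(2) assms(1) by auto
  ultimately have "concat (replicate r (V i)) \<in> Fact x"
    using products[OF ns(1)] by simp
  moreover have "V i \<in> Fact x"
    using products[of "[i]"] by simp
  ultimately show False
    using assms(2) unfolding power_free_def by blast
qed

theorem proposition2p5:
  fixes r :: nat and x :: iword
  assumes "r \<ge> 1" and "sturmian x" and "power_free r x"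
  shows "\<not> (\<exists>y\<in>Omega x. \<exists>V. is_factorization y V \<and>
            ultra_monochromatic (fact_colouring x) V)"
proof
  assume "\<exists>y\<in>Omega x. \<exists>V. is_factorization y V \<and> ultra_monochromatic (fact_colouring x) V"
  then obtain y V where y: "y \<in> Omega x" and V: "is_factorization y V"
    and mono: "ultra_monochromatic (fact_colouring x) V"
    by blast
  note products = ultra_monochromatic_fact_colouring_products_in_Fact[OF y V mono]
  note long_blocks = power_free_products_unbounded_blocks[OF assms(1,3) products]
  show False
  proof (rule sturmian_no_insertion_between_long_factors[OF assms(2)])
    show "V 0 \<noteq> []"
      using V unfolding is_factorization_def by blast
    fix N
    obtain i j where "0 < i" "i < j" "N \<le> length (V i)" "N \<le> length (V j)"
      using long_blocks[of 0 N] long_blocks[of _ N] by blast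
    moreover have "V i @ V j \<in> Fact x" "V i @ V 0 @ V j \<in> Fact x"
      using products[of "[i, j]"] products[of "[i, 0, j]"] \<open>0 < i\<close> \<open>i < j\<close> by simp_all
    ultimately show
      "\<exists>v w. N \<le> length v \<and> N \<le> length w \<and> v @ w \<in> Fact x \<and> v @ V 0 @ w \<in> Fact x"
      by blast
  qed
qed

end
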